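(* Let $d\ge 1$ and let $G$ be a twin-free graph with $n$ vertices whose VC-dimension is at most $d$. Then every identifying code $C$ of $G$ satisfies $|C|\ge (n-1)^{1/d}$.
   Context: For $v\in V(G)$, $N[v]$ is the closed neighbourhood of $v$. An identifying code of $G$ is a set $C\subseteq V(G)$ such that $N[v]\cap C\neq\emptyset$ for all $v$ and $N[u]\cap C\neq N[v]\cap C$ for all distinct $u,v$. $G$ is twin-free if no two distinct vertices have the same closed neighbourhood. A set $X\subseteq V(G)$ is shattered if for every $S\subseteq X$ there is a vertex $v$ with $N[v]\cap X=S$; the VC-dimension of $G$ is the largest size of a shattered set. *)

theory Defs
  imports Complex_Main
begin

definition simple_graph :: "'a set \<Rightarrow> ('a \<Rightarrow> 'a \<Rightarrow> bool) \<Rightarrow> bool" where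
  "simple_graph V E \<longleftrightarrow> finite V \<and> (\<forall>u v. E u v \<longrightarrow> u \<in> V \<and> v \<in> V)
     \<and> (\<forall>u v. E u v \<longrightarrow> E v u) \<and> (\<forall>v. \<not> E v v)"

definition closed_nbhd :: "'a set \<Rightarrow> ('a \<Rightarrow> 'a \<Rightarrow> bool) \<Rightarrow> 'a \<Rightarrow> 'a set" where
  "closed_nbhd V E v = insert v {u \<in> V. E v u}"

definition identifying_code :: "'a set \<Rightarrow> ('a \<Rightarrow> 'a \<Rightarrow> bool) \<Rightarrow> 'a set \<Rightarrow> bool" where
  "identifying_code V E C \<longleftrightarrow> C \<subseteq> V
     \<and> (\<forall>v\<in>V. closed_nbhd V E v \<inter> C \<noteq> {})
     \<and> (\<forall>u\<in>V. \<forall>v\<in>V. u \<noteq> v \<longrightarrow> closed_nbhd V E u \<inter> C \<noteq> closed_nbhd V E v \<inter> C)"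

definition twin_free :: "'a set \<Rightarrow> ('a \<Rightarrow> 'a \<Rightarrow> bool) \<Rightarrow> bool" where
  "twin_free V E \<longleftrightarrow> (\<forall>u\<in>V. \<forall>v\<in>V. u \<noteq> v \<longrightarrow> closed_nbhd V E u \<noteq> closed_nbhd V E v)"

definition shattered :: "'a set \<Rightarrow> ('a \<Rightarrow> 'a \<Rightarrow> bool) \<Rightarrow> 'a set \<Rightarrow> bool" where
  "shattered V E X \<longleftrightarrow> X \<subseteq> V \<and> (\<forall>S\<subseteq>X. \<exists>v\<in>V. closed_nbhd V E v \<inter> X = S)"

definition vc_dim_le :: "'a set \<Rightarrow> ('a \<Rightarrow> 'a \<Rightarrow> bool) \<Rightarrow> nat \<Rightarrow> bool" where
  "vc_dim_le V E d \<longleftrightarrow> (\<forall>X. shattered V E X \<longrightarrow> card X \<le> d)"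

end

theory Submission
  imports Defs
begin

(* Proof idea (Sauer-Shelah-Pajor applied to the traces of the code).
   Let F = { N[v] \<inter> C | v \<in> V } be the family of traces of closed neighbourhoods on
   the identifying code C.  Since C separates all vertices, |F| = n.  Pajor's lemma says
   that a family of subsets of a finite set U shatters at least |F| subsets of U.  A subset
   X \<subseteq> C shattered by F is shattered by the graph, so |X| \<le> d; and a finite set C has at
   most |C|^d + 1 subsets of size at most d.  Hence n \<le> |C|^d + 1, i.e. |C| \<ge> (n-1)^(1/d). *)

definition shatters :: "'a set set \<Rightarrow> 'a set \<Rightarrow> bool" where
  "shatters F X \<longleftrightarrow> (\<forall>S\<subseteq>X. \<exists>A\<in>F. A \<inter> X = S)"

lemma shatters_delete_point:
  assumes "shatters ((\<lambda>A. A - {x}) ` F) X" and "x \<notin> X"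
  shows "shatters F X"
  unfolding shatters_def
proof (intro allI impI)
  fix S assume "S \<subseteq> X"
  then obtain A where "A \<in> F" "(A - {x}) \<inter> X = S"
    using assms(1) unfolding shatters_def by blast
  then show "\<exists>A\<in>F. A \<inter> X = S" using assms(2) by blast
qed

lemma shatters_insert_point:
  assumes "shatters {B \<in> F. x \<notin> B \<and> insert x B \<in> F} X"
  shows "shatters F (insert x X)"
  unfolding shatters_def
proof (intro allI impI)
  fix S assume S: "S \<subseteq> insert x X"
  then have "S - {x} \<subseteq> X" by blast
  then obtain B where B: "B \<in> F" "x \<notin> B" "insert x B \<in> F" "B \<inter> X = S - {x}"
    using assms unfolding shatters_def by blast
  show "\<exists>A\<in>F. A \<inter> insert x X = S"
  proof (cases "x \<in> S")
    case True
    then have "insert x B \<inter> insert x X = S" using B(4) by blast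
    then show ?thesis using B(3) by blast
  next
    case False
    then have "B \<inter> insert x X = S" using B(2,4) S by blast
    then show ?thesis using B(1) by blast
  qed
qed

(* Splitting along x: the map A \<mapsto> A - {x} is at most two-to-one on F, and exactly
   two-to-one above the sets B with both B and insert x B in F. *)
lemma card_delete_point_split:
  assumes "finite F"
  shows "card F = card ((\<lambda>A. A - {x}) ` F) + card {B \<in> F. x \<notin> B \<and> insert x B \<in> F}"
proof -
  define F0 where "F0 = {A \<in> F. x \<notin> A}"
  define G where "G = {A \<in> F. x \<in> A}"
  define F1 where "F1 = (\<lambda>A. A - {x}) ` G"
  have "F = F0 \<union> G" "F0 \<inter> G = {}" unfolding F0_def G_def by auto
  then have "card F = card F0 + card G"
    using assms by (metis card_Un_disjoint finite_Un)
  also have "card G = card F1"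
    unfolding F1_def by (rule card_image[symmetric]) (auto simp: G_def inj_on_def)
  also have "card F0 + card F1 = card (F0 \<union> F1) + card (F0 \<inter> F1)"
    using assms by (intro card_Un_Int) (auto simp: F0_def F1_def G_def)
  also have "F0 \<union> F1 = (\<lambda>A. A - {x}) ` F"
  proof (intro equalityI subsetI)
    fix B assume "B \<in> F0 \<union> F1"
    then show "B \<in> (\<lambda>A. A - {x}) ` F"
    proof
      assume "B \<in> F0"
      then have "B \<in> F" "B = B - {x}" unfolding F0_def by auto
      then show ?thesis by blast
    next
      assume "B \<in> F1"
      then show ?thesis unfolding F1_def G_def by blast
    qed
  next
    fix B assume "B \<in> (\<lambda>A. A - {x}) ` F"
    then obtain A where A: "A \<in> F" "B = A - {x}" by blast
    show "B \<in> F0 \<union> F1"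
    proof (cases "x \<in> A")
      case True
      then have "A \<in> G" using A(1) unfolding G_def by blast
      then show ?thesis using A(2) unfolding F1_def by blast
    next
      case False
      then show ?thesis using A unfolding F0_def by simp
    qed
  qed
  also have "F0 \<inter> F1 = {B \<in> F. x \<notin> B \<and> insert x B \<in> F}"
  proof (intro equalityI subsetI)
    fix B assume B: "B \<in> F0 \<inter> F1"
    then obtain A where "A \<in> F" "x \<in> A" "B = A - {x}" unfolding F1_def G_def by blast
    then have "insert x B = A" by blast
    then show "B \<in> {B \<in> F. x \<notin> B \<and> insert x B \<in> F}"
      using B \<open>A \<in> F\<close> unfolding F0_def by blast
  next
    fix B assume B: "B \<in> {B \<in> F. x \<notin> B \<and> insert x B \<in> F}"
    then have "insert x B \<in> G" "B = insert x B - {x}" unfolding G_def by auto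
    then have "B \<in> F1" unfolding F1_def by blast
    then show "B \<in> F0 \<inter> F1" using B unfolding F0_def by blast
  qed
  finally show ?thesis .
qed

lemma pajor:
  assumes "finite U" and "F \<subseteq> Pow U"
  shows "card F \<le> card {X. X \<subseteq> U \<and> shatters F X}"
  using assms
proof (induction U arbitrary: F rule: finite_induct)
  case empty
  then have "F = {} \<or> F = {{}}" by auto
  then show ?case
  proof
    assume "F = {{}}"
    then have "{X. X \<subseteq> {} \<and> shatters F X} = {{}}" unfolding shatters_def by auto
    then show ?thesis using \<open>F = {{}}\<close> by simp
  qed simp
next
  case (insert x U)
  define D where "D = (\<lambda>A. A - {x}) ` F"
  define P where "P = {B \<in> F. x \<notin> B \<and> insert x B \<in> F}"
  define T where "T = {X. X \<subseteq> insert x U \<and> shatters F X}"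
  define SD where "SD = {X. X \<subseteq> U \<and> shatters D X}"
  define SP where "SP = {X. X \<subseteq> U \<and> shatters P X}"
  have finF: "finite F"
    using insert.prems insert.hyps(1) by (meson finite_Pow_iff finite_insert finite_subset)
  have IH_D: "card D \<le> card SD" unfolding SD_def
    by (rule insert.IH) (use insert.prems in \<open>auto simp: D_def\<close>)
  have IH_P: "card P \<le> card SP" unfolding SP_def
    by (rule insert.IH) (use insert.prems in \<open>auto simp: P_def\<close>)
  have SD_T: "SD \<subseteq> T"
  proof
    fix X assume "X \<in> SD"
    then have "X \<subseteq> U" "shatters D X" unfolding SD_def by auto
    have "x \<notin> X" using \<open>X \<subseteq> U\<close> insert.hyps(2) by blast
    with \<open>shatters D X\<close> have "shatters F X" unfolding D_def by (rule shatters_delete_point)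
    then show "X \<in> T" using \<open>X \<subseteq> U\<close> unfolding T_def by blast
  qed
  have SP_T: "insert x ` SP \<subseteq> T"
  proof
    fix Y assume "Y \<in> insert x ` SP"
    then obtain X where "X \<subseteq> U" "shatters P X" "Y = insert x X" unfolding SP_def by blast
    moreover have "shatters F (insert x X)"
      using \<open>shatters P X\<close> unfolding P_def by (rule shatters_insert_point)
    ultimately show "Y \<in> T" unfolding T_def by blast
  qed
  have disjoint: "SD \<inter> insert x ` SP = {}" using insert.hyps(2) unfolding SD_def by auto
  have inj: "inj_on (insert x) SP"
  proof (rule inj_onI)
    fix X Y assume "X \<in> SP" "Y \<in> SP" "insert x X = insert x Y"
    moreover have "x \<notin> X" "x \<notin> Y" using calculation(1,2) insert.hyps(2) unfolding SP_def by blast+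
    ultimately show "X = Y" by (metis Diff_insert_absorb)
  qed
  have finT: "finite T" unfolding T_def using insert.hyps(1) by auto
  have "card F = card D + card P"
    unfolding D_def P_def by (rule card_delete_point_split[OF finF])
  also have "\<dots> \<le> card SD + card (insert x ` SP)"
    using IH_D IH_P inj by (simp add: card_image)
  also have "\<dots> = card (SD \<union> insert x ` SP)"
    using disjoint SD_T SP_T finT by (intro card_Un_disjoint[symmetric]) (auto intro: finite_subset)
  also have "\<dots> \<le> card T" using SD_T SP_T finT by (intro card_mono) auto
  finally show ?case unfolding T_def .
qed

(* A finite set C has at most |C|^d + 1 subsets of size at most d: every nonempty one is
   the set of entries of some list of length d over C. *)
lemma card_small_subsets:
  assumes "finite C"
  shows "card {X. X \<subseteq> C \<and> card X \<le> d} \<le> card C ^ d + 1"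
proof -
  define L where "L = {xs. set xs \<subseteq> C \<and> length xs = d}"
  have finL: "finite L" unfolding L_def using assms by (simp add: finite_lists_length_eq)
  have "{X. X \<subseteq> C \<and> card X \<le> d} \<subseteq> insert {} (set ` L)"
  proof
    fix X assume "X \<in> {X. X \<subseteq> C \<and> card X \<le> d}"
    then have X: "X \<subseteq> C" "card X \<le> d" by auto
    show "X \<in> insert {} (set ` L)"
    proof (cases "X = {}")
      case False
      obtain ys where ys: "set ys = X" "distinct ys"
        using finite_distinct_list[OF finite_subset[OF X(1) assms]] by metis
      have "hd ys \<in> X" using ys(1) False by (metis hd_in_set set_empty)
      define xs where "xs = ys @ replicate (d - card X) (hd ys)"
      have "set xs = X" unfolding xs_def using ys(1) \<open>hd ys \<in> X\<close> by (auto simp: set_replicate_conv_if)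
      moreover have "length ys = card X" using ys by (metis distinct_card)
      then have "length xs = d" unfolding xs_def using X(2) by simp
      ultimately show ?thesis using X(1) unfolding L_def by blast
    qed simp
  qed
  then have "card {X. X \<subseteq> C \<and> card X \<le> d} \<le> card (insert {} (set ` L))"
    using finL by (intro card_mono) auto
  also have "\<dots> \<le> card (set ` L) + 1" using finL by (simp add: card_insert_if)
  also have "\<dots> \<le> card L + 1" using finL by (simp add: card_image_le)
  also have "card L = card C ^ d" unfolding L_def using assms by (rule card_lists_length_eq)
  finally show ?thesis .
qed

lemma card_code_traces:
  assumes "identifying_code V E C"
  shows "card ((\<lambda>v. closed_nbhd V E v \<inter> C) ` V) = card V"
  using assms unfolding identifying_code_def by (intro card_image) (auto simp: inj_on_def)

lemma shatters_code_traces: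
  assumes "C \<subseteq> V" and "X \<subseteq> C" and "shatters ((\<lambda>v. closed_nbhd V E v \<inter> C) ` V) X"
  shows "shattered V E X"
  unfolding shattered_def
proof (intro conjI allI impI)
  show "X \<subseteq> V" using assms(1,2) by blast
  fix S assume "S \<subseteq> X"
  then obtain w where "w \<in> V" "closed_nbhd V E w \<inter> C \<inter> X = S"
    using assms(3) unfolding shatters_def by blast
  then show "\<exists>v\<in>V. closed_nbhd V E v \<inter> X = S" using assms(2) by blast
qed

lemma code_size_bound:
  assumes "finite V" and "vc_dim_le V E d" and "identifying_code V E C"
  shows "card V \<le> card C ^ d + 1"
proof -
  define F where "F = (\<lambda>v. closed_nbhd V E v \<inter> C) ` V"
  have CV: "C \<subseteq> V" using assms(3) unfolding identifying_code_def by blast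
  have finC: "finite C" using assms(1) CV by (rule finite_subset[rotated])
  have "card V = card F" unfolding F_def using card_code_traces[OF assms(3)] by simp
  also have "\<dots> \<le> card {X. X \<subseteq> C \<and> shatters F X}"
    using finC by (rule pajor) (auto simp: F_def)
  also have "\<dots> \<le> card {X. X \<subseteq> C \<and> card X \<le> d}"
    using finC shatters_code_traces[OF CV] assms(2)
    by (intro card_mono) (auto simp: F_def vc_dim_le_def)
  also have "\<dots> \<le> card C ^ d + 1" using finC by (rule card_small_subsets)
  finally show ?thesis .
qed

lemma root_bound:
  fixes k n d :: nat
  assumes "d \<ge> 1" and "n \<ge> 1" and "n \<le> k ^ d + 1"
  shows "(real n - 1) powr (1 / real d) \<le> real k"
proof -
  have "real n \<le> real k ^ d + 1"
    using assms(3) by (metis of_nat_1 of_nat_add of_nat_le_iff of_nat_power)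
  then have "real n - 1 \<le> real k ^ d" by linarith
  then have "(real n - 1) powr (1 / real d) \<le> (real k ^ d) powr (1 / real d)"
    using assms(2) by (intro powr_mono2) auto
  also have "\<dots> = real k"
  proof (cases "k = 0")
    case True
    then show ?thesis using assms(1) by simp
  next
    case False
    then show ?thesis using assms(1) by (simp add: powr_realpow[symmetric] powr_powr)
  qed
  finally show ?thesis .
qed

theorem mainTheorem2:
  fixes V :: "'a set" and E :: "'a \<Rightarrow> 'a \<Rightarrow> bool" and C :: "'a set" and d n :: nat
  assumes "d \<ge> 1"
    and "simple_graph V E"
    and "V \<noteq> {}"
    and "card V = n"
    and "twin_free V E"
    and "vc_dim_le V E d"
    and "identifying_code V E C"
  shows "real (card C) \<ge> (real n - 1) powr (1 / real d)"
proof -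
  have finV: "finite V" using assms(2) unfolding simple_graph_def by blast
  then have "n \<ge> 1" using assms(3,4) card_0_eq by fastforce
  moreover have "n \<le> card C ^ d + 1"
    using code_size_bound[OF finV assms(6,7)] assms(4) by simp
  ultimately show ?thesis using root_bound[OF assms(1)] by blast
qed

end
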